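(* Let $\tau_0$ be the empty matching and for $n>0$ let $\tau_{2n-1}=\tau_{2n-2}(m+1)(m+1)$, where $m=|\tau_{2n-2}|$ (juxtaposition of $\tau_{2n-2}$ with a single edge), and $\tau_{2n}=1(\tau_{2n-1}+1)1$ (the lifting of $\tau_{2n-1}$). Let $f_{n,k}$ be the number of matchings with exactly $k$ edges in the interval $[11,\tau_n]$ of the matching pattern poset, and $f_n=|[11,\tau_n]|$. Then for $n>0$ and $0<k\leq n$: (i) $f_{n,k}=\sum_{i=0}^{n-k}\binom{k-1}{i}$; (ii) $f_{n}=\varphi_{n+2}-1$, where $\varphi_m$ is the $m$-th Fibonacci number ($\varphi_0=0,\varphi_1=\varphi_2=1$).
   Context: A matching of order $n$ is a partition of $[2n]$ into blocks (edges) of size two, identified with the word in $[n]^{2n}$ where both vertices of an edge carry the same letter and letters appear in increasing order of left vertices; $11$ is the matching with one edge. For a matching $\alpha$, $\alpha+1$ is its word with $1$ added to every letter, and words are concatenated. The matching pattern poset orders matchings by $\sigma\le\tau$ iff $\sigma$ is a pattern of $\tau$: with $|\sigma|=k$, there are $i_1<\dots<i_{2k}$ with $\{i_p,i_q\}\in\tau$ iff $\{p,q\}\in\sigma$. The interval $[11,\tau]$ is the set of matchings $\sigma$ with $11\le\sigma\le\tau$. *)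

theory Defs
  imports Main "HOL-Number_Theory.Fib"
begin

text \<open>A matching of order n is encoded as its canonical word over letters 1..n:
  every letter occurs exactly twice, and letters are introduced in increasing order
  of left vertices (the first occurrence of a new letter is 1 + number of letters seen so far).\<close>
definition is_matching :: "nat list \<Rightarrow> bool" where
  "is_matching w \<longleftrightarrow>
     (\<forall>a \<in> set w. count_list w a = 2) \<and>
     (\<forall>p < length w. w ! p \<in> set (take p w) \<or> w ! p = card (set (take p w)) + 1)"

definition is_pattern :: "nat list \<Rightarrow> nat list \<Rightarrow> bool" where
  "is_pattern \<sigma> \<tau> \<longleftrightarrow>
     (\<exists>g :: nat \<Rightarrow> nat.
        strict_mono_on {..<length \<sigma>} g \<and>
        (\<forall>p < length \<sigma>. g p < length \<tau>) \<and>
        (\<forall>p < length \<sigma>. \<forall>q < length \<sigma>. p \<noteq> q \<longrightarrow>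
            (\<tau> ! g p = \<tau> ! g q \<longleftrightarrow> \<sigma> ! p = \<sigma> ! q)))"

definition interval11 :: "nat list \<Rightarrow> nat list set" where
  "interval11 \<tau> = {\<sigma>. is_matching \<sigma> \<and> is_pattern [1,1] \<sigma> \<and> is_pattern \<sigma> \<tau>}"

fun tau :: "nat \<Rightarrow> nat list" where
  "tau 0 = []"
| "tau (Suc n) =
     (if even n then tau n @ [length (tau n) div 2 + 1, length (tau n) div 2 + 1]
      else 1 # map Suc (tau n) @ [1])"

end

theory Submission
  imports Defs
begin

text \<open>
  Let D n be the set of matchings below tau n, including the empty one. Since tau (n + 1)
  arises from tau n by appending a new edge or by lifting under a new outer edge, a matching
  lies in D (n + 1) iff it lies in D n or arises by the same operation from a matching in D n:
  an embedding into the new word either avoids the new edge or, the pattern being a matching,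
  hits both of its ends, and strict monotonicity forces these to be the images of the outermost
  positions of the pattern. The two operations alternate and agree only on the empty matching,
  so the two parts of D (n + 3) = D (n + 2) \<union> tau_step n ` D (n + 2) meet exactly in
  tau_step n ` D n. Inclusion-exclusion gives |D (n + 3)| + |D n| = 2 |D (n + 2)|, and the
  analogous recurrence for matchings with a fixed number of edges; the Fibonacci numbers and the
  partial row sums of binomial coefficients satisfy the same recurrences and initial values.
\<close>

definition canonical_order :: "nat list \<Rightarrow> bool" where
  "canonical_order w \<longleftrightarrow>
     (\<forall>p < length w. w ! p \<in> set (take p w) \<or> w ! p = card (set (take p w)) + 1)"

lemma is_matching_iff:
  "is_matching w \<longleftrightarrow> (\<forall>a \<in> set w. count_list w a = 2) \<and> canonical_order w"
  unfolding is_matching_def canonical_order_def ..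

lemma canonical_order_Nil [simp]: "canonical_order []"
  by (simp add: canonical_order_def)

lemma canonical_order_snoc:
  "canonical_order (w @ [x]) \<longleftrightarrow> canonical_order w \<and> (x \<in> set w \<or> x = card (set w) + 1)"
  by (auto simp: canonical_order_def nth_append less_Suc_eq)

lemma canonical_order_Cons: "canonical_order (x # w) \<Longrightarrow> x = 1"
  by (auto simp: canonical_order_def dest: spec[of _ 0])

lemma canonical_order_set:
  "canonical_order w \<Longrightarrow> set w = {1..card (set w)}"
proof (induction w rule: rev_induct)
  case (snoc x w)
  then have "set w = {1..card (set w)}" "x \<in> set w \<or> x = card (set w) + 1"
    by (simp_all add: canonical_order_snoc)
  then show ?case
  proof (elim disjE)
    assume "x = card (set w) + 1"
    with \<open>set w = {1..card (set w)}\<close> have "set (w @ [x]) = {1..card (set w) + 1}"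
      by (auto simp: atLeastAtMostSuc_conv)
    then show ?case by simp
  qed (auto simp: insert_absorb)
qed simp

lemma matching_length:
  assumes "is_matching w"
  shows "length w = 2 * card (set w)"
proof -
  have "length w = (\<Sum>a\<in>set w. count_list w a)" by (simp add: sum_count_set)
  also have "\<dots> = (\<Sum>a\<in>set w. 2)"
    using assms by (intro sum.cong) (auto simp: is_matching_iff)
  finally show ?thesis by simp
qed

lemma matching_set:
  assumes "is_matching w"
  shows "set w = {1..length w div 2}"
  using assms canonical_order_set matching_length by (simp add: is_matching_iff)

lemma matching_0_notin: "is_matching w \<Longrightarrow> 0 \<notin> set w"
  by (simp add: matching_set)

lemma matching_Nil [simp]: "is_matching []"
  by (simp add: is_matching_iff)

lemma matching_partner:
  assumes "is_matching w" "p < length w"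
  obtains q where "q < length w" "q \<noteq> p" "w ! q = w ! p"
proof -
  have "card {i. i < length w \<and> w ! p = w ! i} = 2"
    using assms by (simp add: is_matching_iff count_list_eq_length_filter length_filter_conv_card)
  moreover have "card {i. i < length w \<and> w ! p = w ! i} \<le> 1"
    if "{i. i < length w \<and> w ! p = w ! i} \<subseteq> {p}"
    using card_mono[OF _ that] by simp
  ultimately show ?thesis using that by force
qed

section \<open>Appending and lifting an edge\<close>

definition add_edge :: "nat list \<Rightarrow> nat list" where
  "add_edge t = t @ [length t div 2 + 1, length t div 2 + 1]"

definition lift :: "nat list \<Rightarrow> nat list" where
  "lift t = 1 # map Suc t @ [1]"

lemma length_add_edge [simp]: "length (add_edge t) = length t + 2"
  by (simp add: add_edge_def)

lemma length_lift [simp]: "length (lift t) = length t + 2"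
  by (simp add: lift_def)

lemma matching_append_pair_iff:
  "is_matching (s @ [x, x]) \<longleftrightarrow> is_matching s \<and> x = length s div 2 + 1" (is "?lhs \<longleftrightarrow> ?rhs")
proof -
  have canonical: "canonical_order (s @ [x, x]) \<longleftrightarrow> canonical_order s \<and> (x \<in> set s \<or> x = card (set s) + 1)"
    using canonical_order_snoc[of "s @ [x]" x] by (simp add: canonical_order_snoc)
  show ?thesis
  proof
    assume ?lhs
    then have "x \<notin> set s"
      by (simp add: is_matching_iff flip: count_list_0_iff)
    with \<open>?lhs\<close> have "is_matching s" "x = card (set s) + 1"
      by (auto simp: is_matching_iff canonical split: if_splits)
    then show ?rhs using matching_length by simp
  next
    assume ?rhs
    then have "x \<notin> set s" using matching_set by auto
    with \<open>?rhs\<close> have "canonical_order (s @ [x, x])" "\<forall>a \<in> set (s @ [x, x]). count_list (s @ [x, x]) a = 2"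
      using canonical matching_length[of s] by (auto simp: is_matching_iff)
    then show ?lhs by (simp add: is_matching_iff)
  qed
qed

lemma matching_add_edge: "is_matching t \<Longrightarrow> is_matching (add_edge t)"
  by (simp add: add_edge_def matching_append_pair_iff)

lemma canonical_order_Cons_map_Suc:
  "0 \<notin> set s \<Longrightarrow> canonical_order (1 # map Suc s) \<longleftrightarrow> canonical_order s"
proof (induction s rule: rev_induct)
  case Nil
  then show ?case by (simp add: canonical_order_def)
next
  case (snoc x s)
  have "card (set (1 # map Suc s)) = card (set s) + 1"
    using snoc.prems by (auto simp: card_insert_if card_image)
  with snoc show ?case
    using canonical_order_snoc[of "1 # map Suc s" "Suc x"] by (auto simp: canonical_order_snoc)
qed

lemma matching_lift_iff:
  assumes "0 \<notin> set s"
  shows "is_matching (lift s) \<longleftrightarrow> is_matching s"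
proof -
  have "canonical_order (lift s) \<longleftrightarrow> canonical_order s"
    using canonical_order_Cons_map_Suc[OF assms] canonical_order_snoc[of "1 # map Suc s" 1]
    by (simp add: lift_def)
  moreover have "count_list (lift s) 1 = 2"
    using assms by (simp add: lift_def image_iff)
  moreover have "count_list (lift s) (Suc a) = count_list s a" if "a \<in> set s" for a
  proof -
    have "a \<noteq> 0" using that assms by metis
    then have "Suc a \<noteq> 1" by simp
    then show ?thesis by (simp add: lift_def count_list_map_conv)
  qed
  ultimately show ?thesis
    by (auto simp: is_matching_iff lift_def)
qed

lemma matching_lift: "is_matching t \<Longrightarrow> is_matching (lift t)"
  using matching_lift_iff matching_0_notin by blast

lemma matching_wrapped_eq_lift:
  assumes "is_matching (x # s @ [x])"
  obtains s' where "x # s @ [x] = lift s'" "is_matching s'"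
proof -
  define s' where "s' = map (\<lambda>y. y - 1) s"
  have "x = 1" using assms canonical_order_Cons unfolding is_matching_iff by blast
  have "0 \<notin> set s" using matching_0_notin[OF assms] by simp
  then have s: "s = map Suc s'" unfolding s'_def by (induction s) auto
  have "1 \<notin> set s"
    using assms \<open>x = 1\<close> by (simp add: is_matching_iff flip: count_list_0_iff)
  then have "0 \<notin> set s'" using s by auto
  moreover have "x # s @ [x] = lift s'" using s \<open>x = 1\<close> by (simp add: lift_def)
  ultimately show ?thesis using that assms matching_lift_iff by metis
qed

lemma add_edge_eq_lift_iff:
  assumes "is_matching a" "is_matching b"
  shows "add_edge a = lift b \<longleftrightarrow> a = [] \<and> b = []"
proof
  assume eq: "add_edge a = lift b"
  then have "last (add_edge a) = last (lift b)" by simp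
  then have "a = []" using matching_set[OF assms(1)] by (simp add: add_edge_def lift_def)
  with eq show "a = [] \<and> b = []" by (simp add: add_edge_def lift_def)
qed (simp add: add_edge_def lift_def)

lemma nth_add_edge_eq_nth_length_iff:
  assumes "is_matching t" "k < length t + 2"
  shows "add_edge t ! k = add_edge t ! length t \<longleftrightarrow> k \<in> {length t, length t + 1}"
proof -
  have "t ! k \<noteq> length t div 2 + 1" if "k < length t"
    using matching_set[OF assms(1)] nth_mem[OF that] by auto
  then show ?thesis using assms(2) by (auto simp: add_edge_def nth_append)
qed

lemma nth_lift_eq_nth_0_iff:
  assumes "is_matching t" "k < length t + 2"
  shows "lift t ! k = lift t ! 0 \<longleftrightarrow> k \<in> {0, length t + 1}"
proof -
  consider "k = 0" | "k = length t + 1" | i where "k = Suc i" "i < length t"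
    using assms(2) by (cases k) (auto simp: less_Suc_eq)
  then show ?thesis
  proof cases
    case 3
    then have "t ! i \<in> set t" by simp
    then have "t ! i \<noteq> 0" using matching_0_notin[OF assms(1)] by metis
    with 3 show ?thesis by (simp add: lift_def nth_append)
  qed (simp_all add: lift_def nth_append)
qed

section \<open>Pattern embeddings\<close>

definition pattern_embedding :: "(nat \<Rightarrow> nat) \<Rightarrow> nat list \<Rightarrow> nat list \<Rightarrow> bool" where
  "pattern_embedding g s t \<longleftrightarrow>
     strict_mono_on {..<length s} g \<and>
     (\<forall>p < length s. g p < length t) \<and>
     (\<forall>p < length s. \<forall>q < length s. p \<noteq> q \<longrightarrow> (t ! g p = t ! g q \<longleftrightarrow> s ! p = s ! q))"

lemma is_pattern_iff_embedding: "is_pattern s t \<longleftrightarrow> (\<exists>g. pattern_embedding g s t)"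
  unfolding is_pattern_def pattern_embedding_def ..

lemma pattern_embedding_less_iff:
  "pattern_embedding g s t \<Longrightarrow> p < length s \<Longrightarrow> q < length s \<Longrightarrow> g p < g q \<longleftrightarrow> p < q"
  unfolding pattern_embedding_def using strict_mono_on_less[of "{..<length s}" g p q] by simp

lemma pattern_embedding_nth_eq_iff:
  "pattern_embedding g s t \<Longrightarrow> p < length s \<Longrightarrow> q < length s \<Longrightarrow> t ! g p = t ! g q \<longleftrightarrow> s ! p = s ! q"
  unfolding pattern_embedding_def by (cases "p = q") auto

lemma pattern_embedding_gap:
  assumes "pattern_embedding g s t" "p \<le> q" "q < length s"
  shows "g p + (q - p) \<le> g q"
  using assms(2,3)
proof (induction q)
  case (Suc q)
  then show ?case
    using pattern_embedding_less_iff[OF assms(1), of q "Suc q"] by (cases "p = Suc q") auto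
qed simp

lemma is_pattern_refl: "is_pattern s s"
  unfolding is_pattern_iff_embedding pattern_embedding_def
  by (rule exI[of _ id]) (simp add: strict_mono_on_id)

lemma is_pattern_trans:
  assumes "is_pattern r s" "is_pattern s t"
  shows "is_pattern r t"
proof -
  obtain g h where g: "pattern_embedding g r s" and h: "pattern_embedding h s t"
    using assms by (auto simp: is_pattern_iff_embedding)
  have "pattern_embedding (h \<circ> g) r t"
    unfolding pattern_embedding_def
  proof (intro conjI allI impI strict_mono_onI)
    fix p q assume "p \<in> {..<length r}" "q \<in> {..<length r}" "p < q"
    then show "(h \<circ> g) p < (h \<circ> g) q"
      using g h by (simp add: pattern_embedding_less_iff pattern_embedding_def)
  next
    fix p q assume "p < length r" "q < length r"
    then show "t ! (h \<circ> g) p = t ! (h \<circ> g) q \<longleftrightarrow> r ! p = r ! q"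
      using g pattern_embedding_nth_eq_iff[OF g] pattern_embedding_nth_eq_iff[OF h]
      by (simp add: pattern_embedding_def)
  qed (use g h in \<open>auto simp: pattern_embedding_def\<close>)
  then show ?thesis by (auto simp: is_pattern_iff_embedding)
qed

lemma Nil_is_pattern: "is_pattern [] t"
  by (simp add: is_pattern_iff_embedding pattern_embedding_def)

lemma is_pattern_Nil_iff: "is_pattern s [] \<longleftrightarrow> s = []"
  by (auto simp: is_pattern_iff_embedding pattern_embedding_def Nil_is_pattern)

lemma pattern_embedding_map_target:
  "inj f \<Longrightarrow> pattern_embedding g s (map f t) \<longleftrightarrow> pattern_embedding g s t"
  by (auto simp: pattern_embedding_def inj_eq)

lemma pattern_embedding_map_source:
  "inj f \<Longrightarrow> pattern_embedding g (map f s) t \<longleftrightarrow> pattern_embedding g s t"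
  by (auto simp: pattern_embedding_def inj_eq)

lemma is_pattern_map_iff: "inj f \<Longrightarrow> is_pattern s (map f t) \<longleftrightarrow> is_pattern s t"
  by (simp add: is_pattern_iff_embedding pattern_embedding_map_target)

lemma is_pattern_map_map_iff: "inj f \<Longrightarrow> is_pattern (map f s) (map f t) \<longleftrightarrow> is_pattern s t"
  by (simp add: is_pattern_iff_embedding pattern_embedding_map_target pattern_embedding_map_source)

lemma is_pattern_infix: "is_pattern s (u @ s @ v)"
proof -
  have "pattern_embedding (\<lambda>p. length u + p) s (u @ s @ v)"
    by (simp add: pattern_embedding_def strict_mono_on_def nth_append)
  then show ?thesis by (auto simp: is_pattern_iff_embedding)
qed

lemma is_pattern_slice:
  assumes "pattern_embedding g s t" "a + n \<le> length s"
    and "\<forall>p. a \<le> p \<and> p < a + n \<longrightarrow> c \<le> g p \<and> g p < c + m"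
  shows "is_pattern (take n (drop a s)) (take m (drop c t))"
proof -
  have image: "c \<le> g (a + p)" "g (a + p) < c + m" "g (a + p) < length t" if "p < n" for p
    using assms that unfolding pattern_embedding_def by auto
  have "pattern_embedding (\<lambda>p. g (a + p) - c) (take n (drop a s)) (take m (drop c t))"
    unfolding pattern_embedding_def
  proof (intro conjI allI impI strict_mono_onI)
    fix p q assume "p \<in> {..<length (take n (drop a s))}" "q \<in> {..<length (take n (drop a s))}" "p < q"
    then show "g (a + p) - c < g (a + q) - c"
      using assms(1,2) image(1)[of p] pattern_embedding_less_iff[of g s t "a + p" "a + q"] by auto
  next
    fix p q assume "p < length (take n (drop a s))" "q < length (take n (drop a s))"
    then show "take m (drop c t) ! (g (a + p) - c) = take m (drop c t) ! (g (a + q) - c)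
      \<longleftrightarrow> take n (drop a s) ! p = take n (drop a s) ! q"
      using assms(2) image[of p] image[of q] pattern_embedding_nth_eq_iff[OF assms(1), of "a + p" "a + q"]
      by (simp add: less_diff_conv2)
  next
    fix p assume "p < length (take n (drop a s))"
    then show "g (a + p) - c < length (take m (drop c t))"
      using assms(2) image[of p] by auto
  qed
  then show ?thesis by (auto simp: is_pattern_iff_embedding)
qed

lemma nth_replicate_append_replicate:
  "p < a + length w + b \<Longrightarrow>
   (replicate a z @ w @ replicate b z) ! p = (if p < a \<or> a + length w \<le> p then z else w ! (p - a))"
  by (auto simp: nth_append)

(* add_edge and lift are paddings of this kind, with (a, b) = (0, 2) and (1, 1). *)
lemma is_pattern_pad:
  assumes "is_pattern s t" "x \<notin> set s" "y \<notin> set t"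
  shows "is_pattern (replicate a x @ s @ replicate b x) (replicate a y @ t @ replicate b y)"
proof -
  obtain g where g: "pattern_embedding g s t"
    using assms(1) by (auto simp: is_pattern_iff_embedding)
  define h where
    "h p = (if p < a then p else if p < a + length s then a + g (p - a) else p - length s + length t)" for p
  let ?inner = "\<lambda>p. a \<le> p \<and> p < a + length s"
  have inner: "p - a < length s" "g (p - a) < length t" "t ! g (p - a) \<noteq> y" "s ! (p - a) \<noteq> x"
    if "?inner p" for p
  proof -
    show "p - a < length s" using that by linarith
    then show "g (p - a) < length t" "t ! g (p - a) \<noteq> y" "s ! (p - a) \<noteq> x"
      using g assms(2,3) nth_mem unfolding pattern_embedding_def by metis+
  qed
  have h_mono: "h p < h q" if "p < q" "q < a + length s + b" for p q
    using that inner(2)[of p] pattern_embedding_less_iff[OF g, of "p - a" "q - a"]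
    unfolding h_def by (auto simp: not_less)
  have h_bound: "h p < a + length t + b" if "p < a + length s + b" for p
    using that inner(2)[of p] unfolding h_def by (auto simp: not_less)
  have s_at: "(replicate a x @ s @ replicate b x) ! p = (if ?inner p then s ! (p - a) else x)"
    if "p < a + length s + b" for p
    using that by (auto simp: nth_replicate_append_replicate)
  have t_at_h: "(replicate a y @ t @ replicate b y) ! h p = (if ?inner p then t ! g (p - a) else y)"
    if "p < a + length s + b" for p
    using that h_bound[OF that] inner(2)[of p]
    by (auto simp: nth_replicate_append_replicate h_def)
  have inner_eq: "t ! g (p - a) = t ! g (q - a) \<longleftrightarrow> s ! (p - a) = s ! (q - a)"
    if "?inner p" "?inner q" "p \<noteq> q" for p q
    using g that inner(1)[of p] inner(1)[of q] unfolding pattern_embedding_def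
    by (metis add_diff_inverse_nat not_less)
  have "pattern_embedding h (replicate a x @ s @ replicate b x) (replicate a y @ t @ replicate b y)"
    unfolding pattern_embedding_def
  proof (intro conjI allI impI strict_mono_onI)
    fix p q assume "p < length (replicate a x @ s @ replicate b x)"
      "q < length (replicate a x @ s @ replicate b x)" "p \<noteq> q"
    then show "(replicate a y @ t @ replicate b y) ! h p = (replicate a y @ t @ replicate b y) ! h q
      \<longleftrightarrow> (replicate a x @ s @ replicate b x) ! p = (replicate a x @ s @ replicate b x) ! q"
      using s_at[of p] s_at[of q] t_at_h[of p] t_at_h[of q] inner[of p] inner[of q] inner_eq[of p q]
      by (auto simp del: not_less)
  qed (use h_mono h_bound in \<open>auto simp: add.assoc\<close>)
  then show ?thesis by (auto simp: is_pattern_iff_embedding)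
qed

lemma pattern_embedding_hits_edge:
  assumes "is_matching s" "pattern_embedding g s t" "p < length s" "g p \<in> {i, j}"
    and edge: "\<forall>k < length t. t ! k = t ! i \<longleftrightarrow> k \<in> {i, j}"
  obtains p' q' where "p' < length s" "q' < length s" "g p' = i" "g q' = j"
proof -
  obtain q where q: "q < length s" "q \<noteq> p" "s ! q = s ! p"
    using matching_partner[OF assms(1,3)] .
  then have "g q \<noteq> g p" "t ! g q = t ! g p" "g p < length t" "g q < length t"
    using assms(2,3) pattern_embedding_less_iff[OF assms(2)] unfolding pattern_embedding_def
    by (metis nat_neq_iff)+
  then have "g q \<in> {i, j}"
    using edge[rule_format, of "g p"] edge[rule_format, of "g q"] assms(4) by simp
  show ?thesis
  proof (cases "g p = i")
    case True
    then show ?thesis using that[of p q] assms(3,4) q(1) \<open>g q \<in> {i, j}\<close> \<open>g q \<noteq> g p\<close> by auto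
  next
    case False
    then show ?thesis using that[of q p] assms(3,4) q(1) \<open>g q \<in> {i, j}\<close> \<open>g q \<noteq> g p\<close> by auto
  qed
qed

lemma pattern_embedding_last_two:
  assumes "pattern_embedding g s t" "p < length s" "q < length s"
    and "g p + 1 = g q" "g q + 1 = length t"
  shows "p + 2 = length s \<and> q + 1 = length s"
proof -
  have "p < q" using assms by (metis less_add_one pattern_embedding_less_iff)
  moreover have "g q + (length s - 1 - q) \<le> g (length s - 1)" "g (length s - 1) < length t"
    using assms pattern_embedding_gap[OF assms(1), of q "length s - 1"]
    unfolding pattern_embedding_def by auto
  moreover have "g p + (q - p) \<le> g q"
    using pattern_embedding_gap[OF assms(1)] assms(3) calculation(1) by simp
  ultimately show ?thesis using assms(3-5) by linarith
qed

lemma pattern_embedding_first_last: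
  assumes "pattern_embedding g s t" "p < length s" "q < length s"
    and "g p = 0" "g q + 1 = length t"
  shows "p = 0 \<and> q + 1 = length s"
proof -
  have "g 0 + p \<le> g p"
    using pattern_embedding_gap[OF assms(1), of 0 p] assms(2) by simp
  moreover have "g q + (length s - 1 - q) \<le> g (length s - 1)" "g (length s - 1) < length t"
    using assms pattern_embedding_gap[OF assms(1), of q "length s - 1"]
    unfolding pattern_embedding_def by auto
  ultimately show ?thesis using assms(3-5) by linarith
qed

lemma is_pattern_add_edge: "is_pattern t (add_edge t)"
  using is_pattern_infix[of t "[]"] by (simp add: add_edge_def)

lemma is_pattern_lift: "is_pattern t (lift t)"
proof -
  have "is_pattern t (map Suc t)"
    using is_pattern_map_iff[OF inj_Suc] is_pattern_refl by blast
  moreover have "is_pattern (map Suc t) (lift t)"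
    using is_pattern_infix[of "map Suc t" "[1]" "[1]"] by (simp add: lift_def)
  ultimately show ?thesis by (rule is_pattern_trans)
qed

lemma add_edge_mono:
  assumes "is_matching s" "is_matching t" "is_pattern s t"
  shows "is_pattern (add_edge s) (add_edge t)"
  using is_pattern_pad[OF assms(3), of "length s div 2 + 1" "length t div 2 + 1" 0 2]
    matching_set[OF assms(1)] matching_set[OF assms(2)]
  by (simp add: add_edge_def numeral_2_eq_2)

lemma lift_mono:
  assumes "is_matching s" "is_matching t" "is_pattern s t"
  shows "is_pattern (lift s) (lift t)"
proof -
  have "is_pattern (map Suc s) (map Suc t)"
    using assms(3) by (simp add: is_pattern_map_map_iff)
  moreover have "1 \<notin> set (map Suc s)" "1 \<notin> set (map Suc t)"
    using matching_0_notin[OF assms(1)] matching_0_notin[OF assms(2)] by auto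
  ultimately show ?thesis
    using is_pattern_pad[of "map Suc s" "map Suc t" 1 1 1 1] by (simp add: lift_def)
qed

lemma take_append_last_two: "length s = n + 2 \<Longrightarrow> s = take n s @ [s ! n, s ! Suc n]"
  by (rule nth_equalityI) (auto simp: nth_append nth_Cons' less_Suc_eq)

lemma Cons_slice_append_last: "length s = n + 2 \<Longrightarrow> s = s ! 0 # take n (drop 1 s) @ [s ! Suc n]"
  by (rule nth_equalityI) (auto simp: nth_append nth_Cons' less_Suc_eq)

lemma is_pattern_add_edge_cases:
  assumes s: "is_matching s" and t: "is_matching t" and "is_pattern s (add_edge t)"
  shows "is_pattern s t \<or> (\<exists>s'. s = add_edge s' \<and> is_matching s' \<and> is_pattern s' t)"
proof -
  obtain g where g: "pattern_embedding g s (add_edge t)"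
    using assms(3) by (auto simp: is_pattern_iff_embedding)
  have g_bound: "g p < length t + 2" if "p < length s" for p
    using g that by (simp add: pattern_embedding_def)
  show ?thesis
  proof (cases "\<forall>p < length s. g p < length t")
    case True
    then have "is_pattern (take (length s) (drop 0 s)) (take (length t) (drop 0 (add_edge t)))"
      by (intro is_pattern_slice[OF g]) auto
    then show ?thesis by (simp add: add_edge_def)
  next
    case False
    \<comment> \<open>the embedding meets the new edge, hence both of its ends\<close>
    then obtain p where p: "p < length s" "g p \<in> {length t, length t + 1}"
      using g_bound by (force simp: not_less)
    obtain p' q' where pq: "p' < length s" "q' < length s" "g p' = length t" "g q' = length t + 1"
      using pattern_embedding_hits_edge[OF s g p] nth_add_edge_eq_nth_length_iff[OF t] by auto
    then have len: "length s = p' + 2" "q' = Suc p'"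
      using pattern_embedding_last_two[OF g pq(1,2)] pq(3,4) by simp_all
    have "s ! p' = s ! q'"
      using pattern_embedding_nth_eq_iff[OF g pq(1,2)] pq(3,4)
        nth_add_edge_eq_nth_length_iff[OF t, of "length t + 1"] by simp
    then have "s = take p' s @ [s ! p', s ! p']"
      using take_append_last_two[OF len(1)] len(2) by simp
    then have "is_matching (take p' s)" "s = add_edge (take p' s)"
      using s matching_append_pair_iff[of "take p' s" "s ! p'"] len by (auto simp: add_edge_def)
    moreover have "is_pattern (take p' (drop 0 s)) (take (length t) (drop 0 (add_edge t)))"
      using pq len pattern_embedding_less_iff[OF g, of _ p']
      by (intro is_pattern_slice[OF g]) auto
    ultimately show ?thesis by (auto simp: add_edge_def)
  qed
qed

lemma is_pattern_lift_cases:
  assumes s: "is_matching s" and t: "is_matching t" and "is_pattern s (lift t)"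
  shows "is_pattern s t \<or> (\<exists>s'. s = lift s' \<and> is_matching s' \<and> is_pattern s' t)"
proof -
  obtain g where g: "pattern_embedding g s (lift t)"
    using assms(3) by (auto simp: is_pattern_iff_embedding)
  have g_bound: "g p < length t + 2" if "p < length s" for p
    using g that by (simp add: pattern_embedding_def)
  have middle: "take (length t) (drop 1 (lift t)) = map Suc t"
    by (simp add: lift_def)
  show ?thesis
  proof (cases "\<forall>p < length s. 1 \<le> g p \<and> g p < 1 + length t")
    case True
    then have "is_pattern (take (length s) (drop 0 s)) (take (length t) (drop 1 (lift t)))"
      by (intro is_pattern_slice[OF g]) auto
    then show ?thesis by (simp only: middle is_pattern_map_iff[OF inj_Suc]) simp
  next
    case False
    then obtain p where p: "p < length s" "g p \<in> {0, length t + 1}"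
      using g_bound by (force simp: not_less)
    obtain p' q' where pq: "p' < length s" "q' < length s" "g p' = 0" "g q' = length t + 1"
      using pattern_embedding_hits_edge[OF s g p] nth_lift_eq_nth_0_iff[OF t] by auto
    then have "p' = 0" "q' + 1 = length s"
      using pattern_embedding_first_last[OF g pq(1,2)] by simp_all
    then obtain n where len: "length s = n + 2" "q' = Suc n"
      using pq(3,4) by (cases q') auto
    have "s ! 0 = s ! q'"
      using pattern_embedding_nth_eq_iff[OF g pq(1,2)] pq(3,4) \<open>p' = 0\<close>
        nth_lift_eq_nth_0_iff[OF t, of "length t + 1"] by simp
    then have s_eq: "s = s ! 0 # take n (drop 1 s) @ [s ! 0]"
      using Cons_slice_append_last[OF len(1)] len(2) by simp
    then obtain s' where s': "s = lift s'" "is_matching s'"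
      using matching_wrapped_eq_lift s by metis
    then have "take n (drop 1 s) = map Suc s'"
      using s_eq by (simp add: lift_def)
    moreover have "is_pattern (take n (drop 1 s)) (take (length t) (drop 1 (lift t)))"
      using pq \<open>p' = 0\<close> len pattern_embedding_less_iff[OF g, of 0] pattern_embedding_less_iff[OF g, of _ q']
      by (intro is_pattern_slice[OF g]) (auto simp: Suc_le_eq)
    ultimately show ?thesis
      using s' by (simp only: middle is_pattern_map_map_iff[OF inj_Suc]) blast
  qed
qed

section \<open>The matchings below tau n\<close>

definition tau_step :: "nat \<Rightarrow> nat list \<Rightarrow> nat list" where
  "tau_step n = (if even n then add_edge else lift)"

lemma tau_Suc: "tau (Suc n) = tau_step n (tau n)"
  by (simp add: tau_step_def add_edge_def lift_def)

lemma tau_step_Suc_Suc: "tau_step (Suc (Suc n)) = tau_step n"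
  by (simp add: tau_step_def)

lemma length_tau_step: "length (tau_step n s) = length s + 2"
  by (simp add: tau_step_def)

lemma inj_tau_step: "inj (tau_step n)"
  by (auto simp: tau_step_def add_edge_def lift_def inj_def)

lemma matching_tau_step: "is_matching s \<Longrightarrow> is_matching (tau_step n s)"
  by (simp add: tau_step_def matching_add_edge matching_lift)

lemma matching_tau: "is_matching (tau n)"
  by (induction n) (simp, simp add: tau_Suc matching_tau_step del: tau.simps)

lemma tau_step_eq_tau_step_Suc:
  "is_matching a \<Longrightarrow> is_matching b \<Longrightarrow> tau_step n a = tau_step (Suc n) b \<Longrightarrow> a = []"
  using add_edge_eq_lift_iff[of a b] add_edge_eq_lift_iff[of b a]
  by (cases "even n") (auto simp: tau_step_def)

lemma is_pattern_tau_step: "is_pattern t (tau_step n t)"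
  by (simp add: tau_step_def is_pattern_add_edge is_pattern_lift)

lemma is_pattern_tau_step_iff:
  assumes "is_matching s" "is_matching t"
  shows "is_pattern s (tau_step n t) \<longleftrightarrow>
    is_pattern s t \<or> (\<exists>s'. s = tau_step n s' \<and> is_matching s' \<and> is_pattern s' t)"
proof
  assume "is_pattern s (tau_step n t)"
  then show "is_pattern s t \<or> (\<exists>s'. s = tau_step n s' \<and> is_matching s' \<and> is_pattern s' t)"
    using is_pattern_add_edge_cases[OF assms] is_pattern_lift_cases[OF assms]
    by (simp add: tau_step_def split: if_splits)
next
  have "is_pattern (tau_step n s') (tau_step n t)" if "is_matching s'" "is_pattern s' t" for s'
    using that assms(2) add_edge_mono lift_mono by (simp add: tau_step_def)
  then show "is_pattern s t \<or> (\<exists>s'. s = tau_step n s' \<and> is_matching s' \<and> is_pattern s' t)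
      \<Longrightarrow> is_pattern s (tau_step n t)"
    using is_pattern_tau_step is_pattern_trans by blast
qed

definition tau_downset :: "nat \<Rightarrow> nat list set" where
  "tau_downset n = {\<sigma>. is_matching \<sigma> \<and> is_pattern \<sigma> (tau n)}"

lemma Nil_in_tau_downset: "[] \<in> tau_downset n"
  by (simp add: tau_downset_def Nil_is_pattern)

lemma tau_downset_0: "tau_downset 0 = {[]}"
  by (auto simp: tau_downset_def is_pattern_Nil_iff)

lemma tau_downset_Suc: "tau_downset (Suc n) = tau_downset n \<union> tau_step n ` tau_downset n"
  using is_pattern_tau_step_iff[OF _ matching_tau]
  by (auto simp: tau_downset_def tau_Suc matching_tau_step simp del: tau.simps)

lemma tau_downset_1: "tau_downset 1 = {[], [1, 1]}"
  using tau_downset_Suc[of 0] by (auto simp: tau_downset_0 tau_step_def add_edge_def)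

lemma tau_downset_2: "tau_downset 2 = {[], [1, 1], [1, 2, 2, 1]}"
  using tau_downset_Suc[of 1] tau_downset_1 by (auto simp: tau_step_def lift_def numeral_2_eq_2)

lemma finite_tau_downset: "finite (tau_downset n)"
  by (induction n) (simp_all add: tau_downset_0 tau_downset_Suc)

lemma tau_downset_overlap:
  "tau_downset (n + 2) \<inter> tau_step n ` tau_downset (n + 2) = tau_step n ` tau_downset n"
proof (intro equalityI subsetI)
  fix x assume "x \<in> tau_downset (n + 2) \<inter> tau_step n ` tau_downset (n + 2)"
  then obtain s where x: "x = tau_step n s" "s \<in> tau_downset (n + 2)" "x \<in> tau_downset (n + 2)"
    by blast
  then have "is_matching s" by (simp add: tau_downset_def)
  consider "x \<in> tau_downset n" | "x \<in> tau_step n ` tau_downset n" | "x \<in> tau_step (Suc n) ` tau_downset (Suc n)"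
    using x(3) by (auto simp: tau_downset_Suc)
  then show "x \<in> tau_step n ` tau_downset n"
  proof cases
    case 1
    have "is_pattern s x"
      using x(1) is_pattern_tau_step by simp
    with 1 have "s \<in> tau_downset n"
      using \<open>is_matching s\<close> is_pattern_trans by (auto simp: tau_downset_def)
    with x(1) show ?thesis by blast
  next
    case 2
    then show ?thesis .
  next
    case 3
    then have "s = []"
      using x(1) \<open>is_matching s\<close> tau_step_eq_tau_step_Suc by (auto simp: tau_downset_def)
    with x(1) show ?thesis using Nil_in_tau_downset by blast
  qed
qed (auto simp: tau_downset_Suc numeral_2_eq_2)

section \<open>Counting\<close>

lemma card_Un_inj_image:
  assumes "inj f" "finite A" "finite B" "A \<inter> f ` B = f ` C"
  shows "card (A \<union> f ` B) + card C = card A + card B"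
proof -
  have "card (f ` C) = card C"
    by (rule card_image) (meson assms(1) inj_on_subset subset_UNIV)
  moreover have "card (f ` B) = card B"
    by (rule card_image) (meson assms(1) inj_on_subset subset_UNIV)
  ultimately show ?thesis
    using card_Un_Int[of A "f ` B"] assms(2-4) by simp
qed

definition with_edges :: "nat \<Rightarrow> nat list set" where
  "with_edges k = {\<sigma>. length \<sigma> = 2 * k}"

lemma tau_step_image_with_edges:
  "tau_step n ` (X \<inter> with_edges k) = tau_step n ` X \<inter> with_edges (Suc k)"
  by (auto simp: with_edges_def length_tau_step)

lemma tau_downset_with_edges_0: "tau_downset n \<inter> with_edges 0 = {[]}"
  using Nil_in_tau_downset by (auto simp: with_edges_def)

lemma card_tau_downset_rec:
  "card (tau_downset (n + 3)) + card (tau_downset n) = 2 * card (tau_downset (n + 2))"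
proof -
  have "tau_downset (n + 3) = tau_downset (n + 2) \<union> tau_step n ` tau_downset (n + 2)"
    using tau_downset_Suc[of "n + 2"] by (simp add: numeral_3_eq_3 tau_step_Suc_Suc)
  then show ?thesis
    using card_Un_inj_image[OF inj_tau_step finite_tau_downset finite_tau_downset tau_downset_overlap]
    by simp
qed

lemma card_tau_downset_with_edges_rec:
  "card (tau_downset (n + 3) \<inter> with_edges (Suc k)) + card (tau_downset n \<inter> with_edges k) =
   card (tau_downset (n + 2) \<inter> with_edges (Suc k)) + card (tau_downset (n + 2) \<inter> with_edges k)"
proof -
  let ?A = "tau_downset (n + 2) \<inter> with_edges (Suc k)"
  let ?B = "tau_downset (n + 2) \<inter> with_edges k"
  have "tau_downset (n + 3) \<inter> with_edges (Suc k) = ?A \<union> tau_step n ` ?B"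
    using tau_downset_Suc[of "n + 2"]
    by (auto simp: numeral_3_eq_3 tau_step_Suc_Suc tau_step_image_with_edges)
  moreover have "?A \<inter> tau_step n ` ?B = tau_step n ` (tau_downset n \<inter> with_edges k)"
    using tau_downset_overlap[of n] by (auto simp: tau_step_image_with_edges)
  ultimately show ?thesis
    using card_Un_inj_image[OF inj_tau_step, of ?A ?B] finite_tau_downset by simp
qed

(* For 0 < k \<le> n this is the sum in the theorem; the truncated subtractions make it
   1 for k = 0 (the empty matching) and 0 for k > n. *)
definition edge_count :: "nat \<Rightarrow> nat \<Rightarrow> nat" where
  "edge_count n k = (\<Sum>i < Suc n - k. (k - 1) choose i)"

lemma sum_Suc_choose_lessThan:
  "(\<Sum>i<m. Suc j choose i) = (\<Sum>i<m. j choose i) + (\<Sum>i<m - 1. j choose i)"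
proof (induction m)
  case (Suc m)
  then show ?case by (cases m) simp_all
qed simp

lemma sum_zero_choose_lessThan: "(\<Sum>i<m. 0 choose i) = (if m = 0 then 0 else 1)"
proof -
  have "(\<Sum>i<m. 0 choose i) = (\<Sum>i<m. if i = 0 then 1 else 0 :: nat)"
    by (intro sum.cong) (auto simp: binomial_eq_0)
  then show ?thesis by simp
qed

lemma edge_count_0 [simp]: "edge_count n 0 = 1"
  by (simp add: edge_count_def sum_zero_choose_lessThan)

lemma edge_count_rec:
  "edge_count (n + 3) (Suc k) + edge_count n k = edge_count (n + 2) (Suc k) + edge_count (n + 2) k"
proof (cases k)
  case 0
  then show ?thesis by (simp add: edge_count_def sum_zero_choose_lessThan)
next
  case (Suc j)
  then show ?thesis
    by (simp add: edge_count_def sum_Suc_choose_lessThan numeral_3_eq_3 numeral_2_eq_2 Suc_diff_le)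
qed

lemma nat_induct_3 [case_names 0 1 2 step]:
  fixes n :: nat
  assumes "P 0" "P 1" "P 2" "\<And>n. P n \<Longrightarrow> P (n + 1) \<Longrightarrow> P (n + 2) \<Longrightarrow> P (n + 3)"
  shows "P n"
proof (induction n rule: less_induct)
  case (less n)
  show ?case
  proof (cases "n < 3")
    case True
    then consider "n = 0" | "n = 1" | "n = 2" by linarith
    then show ?thesis by cases (use assms in simp_all)
  next
    case False
    then have "n = (n - 3) + 3" by simp
    moreover have "P (n - 3)" "P (n - 3 + 1)" "P (n - 3 + 2)"
      using less.IH False by simp_all
    ultimately show ?thesis using assms(4) by metis
  qed
qed

lemma card_tau_downset: "card (tau_downset n) = fib (n + 2)"
proof (induction n rule: nat_induct_3)
  case (step n)
  have "fib (n + 5) + fib (n + 2) = 2 * fib (n + 4)"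
    by (simp add: eval_nat_numeral)
  then show ?case
    using step card_tau_downset_rec[of n] by (simp add: eval_nat_numeral)
qed (use tau_downset_0 tau_downset_1 tau_downset_2 in \<open>simp_all add: eval_nat_numeral\<close>)

lemma card_tau_downset_with_edges: "card (tau_downset n \<inter> with_edges k) = edge_count n k"
proof (induction n arbitrary: k rule: nat_induct_3)
  case 0
  then show ?case by (cases k) (simp_all add: tau_downset_0 with_edges_def edge_count_def)
next
  case 1
  consider "k = 0" | "k = 1" | "k \<ge> 2" by linarith
  then show ?case
    by cases (use tau_downset_1 in \<open>simp_all add: with_edges_def edge_count_def Int_insert_left\<close>)
next
  case 2
  consider "k = 0" | "k = 1" | "k = 2" | "k \<ge> 3" by linarith
  then show ?case
    by cases (use tau_downset_2 in \<open>simp_all add: with_edges_def edge_count_def Int_insert_left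
      numeral_3_eq_3 numeral_2_eq_2\<close>)
next
  case (step n)
  show ?case
  proof (cases k)
    case 0
    then show ?thesis by (simp add: tau_downset_with_edges_0)
  next
    case (Suc j)
    then show ?thesis
      using step card_tau_downset_with_edges_rec[of n j] edge_count_rec[of n j] by simp
  qed
qed

lemma is_pattern_11_iff: "is_matching s \<Longrightarrow> is_pattern [1, 1] s \<longleftrightarrow> s \<noteq> []"
proof
  assume "is_matching s" "s \<noteq> []"
  then obtain q where q: "q < length s" "q \<noteq> 0" "s ! q = s ! 0"
    using matching_partner[of s 0] by auto
  then have "pattern_embedding (\<lambda>i. if i = 0 then 0 else q) [1, 1] s"
    by (auto simp: pattern_embedding_def strict_mono_on_def less_2_cases_iff nth_Cons')
  then show "is_pattern [1, 1] s" by (auto simp: is_pattern_iff_embedding)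
qed (auto simp: is_pattern_Nil_iff)

lemma interval11_tau: "interval11 (tau n) = tau_downset n - {[]}"
  using is_pattern_11_iff by (auto simp: interval11_def tau_downset_def)

theorem proposition6:
  fixes n :: nat
  assumes "n > 0"
  shows "(\<forall>k. 0 < k \<and> k \<le> n \<longrightarrow>
            card {\<sigma> \<in> interval11 (tau n). length \<sigma> = 2 * k} = (\<Sum>i = 0..n - k. (k - 1) choose i))
         \<and> card (interval11 (tau n)) = fib (n + 2) - 1"
proof (intro conjI allI impI)
  fix k assume k: "0 < k \<and> k \<le> n"
  then have "{\<sigma> \<in> interval11 (tau n). length \<sigma> = 2 * k} = tau_downset n \<inter> with_edges k"
    by (auto simp: interval11_tau with_edges_def)
  moreover have "{..<Suc n - k} = {0..n - k}"
    using k by (auto simp: Suc_diff_le)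
  ultimately show "card {\<sigma> \<in> interval11 (tau n). length \<sigma> = 2 * k} = (\<Sum>i = 0..n - k. (k - 1) choose i)"
    by (simp add: card_tau_downset_with_edges edge_count_def)
next
  show "card (interval11 (tau n)) = fib (n + 2) - 1"
    using card_tau_downset Nil_in_tau_downset finite_tau_downset
    by (simp add: interval11_tau card_Diff_singleton)
qed

end
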